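(* Let $R$ be a ring, $M$ a Tate $R$-module and $T\in\operatorname{End}M$ a continuous endomorphism. The following are equivalent: (i) $T^n\to0$ as $n\to\infty$, meaning that for all lattices $L,L'\subset M$ there exists $N$ such that $T^nL'\subset L$ for all $n>N$; (ii) there exists a (unique) structure of topological $R[[t]]$-module on $M$ (extending its topological $R$-module structure, $R[[t]]$ having the $t$-adic topology) such that $T$ acts as multiplication by $t$.
   Context: A Tate $R$-module is a topological direct summand of $P\oplus Q^*$ with $P$ a discrete projective left $R$-module, $Q$ a discrete projective right $R$-module and $Q^*=\operatorname{Hom}_R(Q,R)$ with the topology of pointwise convergence. A lattice in $M$ is an open submodule $L$ such that $L/U$ is finitely generated for every open submodule $U\subset L$. *)

theory Defs
  imports "HOL-Analysis.Analysis" "HOL-Computational_Algebra.Formal_Power_Series"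
begin

definition lmod :: "('r::ring_1 \<Rightarrow> 'a::ab_group_add \<Rightarrow> 'a) \<Rightarrow> bool" where
  "lmod s \<longleftrightarrow> (\<forall>r t x y.
      s r (x + y) = s r x + s r y \<and> s (r + t) x = s r x + s t x \<and>
      s (r * t) x = s r (s t x) \<and> s 1 x = x)"

definition rmod :: "('a::ab_group_add \<Rightarrow> 'r::ring_1 \<Rightarrow> 'a) \<Rightarrow> bool" where
  "rmod s \<longleftrightarrow> (\<forall>r t x y.
      s (x + y) r = s x r + s y r \<and> s x (r + t) = s x r + s x t \<and>
      s x (r * t) = s (s x r) t \<and> s x 1 = x)"

text \<open>Projective left module: direct summand of a free module, namely the canonical
  epimorphism from the free module on the underlying set,
  c \<mapsto> sum over x of c(x)x, admits an R-linear section.\<close>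
definition lprojective :: "('r::ring_1 \<Rightarrow> 'a::ab_group_add \<Rightarrow> 'a) \<Rightarrow> bool" where
  "lprojective s \<longleftrightarrow> lmod s \<and> (\<exists>\<sigma> :: 'a \<Rightarrow> 'a \<Rightarrow> 'r.
      (\<forall>x. finite {y. \<sigma> x y \<noteq> 0}) \<and>
      (\<forall>x y. \<sigma> (x + y) = (\<lambda>z. \<sigma> x z + \<sigma> y z)) \<and>
      (\<forall>r x. \<sigma> (s r x) = (\<lambda>z. r * \<sigma> x z)) \<and>
      (\<forall>x. (\<Sum>y\<in>{y. \<sigma> x y \<noteq> 0}. s (\<sigma> x y) y) = x))"

definition rprojective :: "('a::ab_group_add \<Rightarrow> 'r::ring_1 \<Rightarrow> 'a) \<Rightarrow> bool" where
  "rprojective s \<longleftrightarrow> rmod s \<and> (\<exists>\<sigma> :: 'a \<Rightarrow> 'a \<Rightarrow> 'r.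
      (\<forall>x. finite {y. \<sigma> x y \<noteq> 0}) \<and>
      (\<forall>x y. \<sigma> (x + y) = (\<lambda>z. \<sigma> x z + \<sigma> y z)) \<and>
      (\<forall>r x. \<sigma> (s x r) = (\<lambda>z. \<sigma> x z * r)) \<and>
      (\<forall>x. (\<Sum>y\<in>{y. \<sigma> x y \<noteq> 0}. s y (\<sigma> x y)) = x))"

definition rdual :: "('q::ab_group_add \<Rightarrow> 'r::ring_1 \<Rightarrow> 'q) \<Rightarrow> ('q \<Rightarrow> 'r) set" where
  "rdual sQ = {f. (\<forall>x y. f (x + y) = f x + f y) \<and> (\<forall>x r. f (sQ x r) = f x * r)}"

definition rdual_top :: "('q::ab_group_add \<Rightarrow> 'r::ring_1 \<Rightarrow> 'q) \<Rightarrow> ('q \<Rightarrow> 'r) topology" where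
  "rdual_top sQ = subtopology (product_topology (\<lambda>_. discrete_topology (UNIV::'r set)) UNIV) (rdual sQ)"

definition PQ_top :: "('q::ab_group_add \<Rightarrow> 'r::ring_1 \<Rightarrow> 'q) \<Rightarrow> ('p \<times> ('q \<Rightarrow> 'r)) topology" where
  "PQ_top sQ = prod_topology (discrete_topology UNIV) (rdual_top sQ)"

definition PQ_add :: "'p::ab_group_add \<times> ('q \<Rightarrow> 'r::ring_1) \<Rightarrow> 'p \<times> ('q \<Rightarrow> 'r) \<Rightarrow> 'p \<times> ('q \<Rightarrow> 'r)" where
  "PQ_add a b = (fst a + fst b, \<lambda>q. snd a q + snd b q)"

definition PQ_scale :: "('r::ring_1 \<Rightarrow> 'p::ab_group_add \<Rightarrow> 'p) \<Rightarrow> 'r \<Rightarrow> 'p \<times> ('q \<Rightarrow> 'r) \<Rightarrow> 'p \<times> ('q \<Rightarrow> 'r)" where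
  "PQ_scale sP r a = (sP r (fst a), \<lambda>q. r * snd a q)"

text \<open>(s, \<tau>) is a Tate module, witnessed by P (discrete projective left module),
  Q (discrete projective right module), and continuous R-linear maps
  i : M \<rightarrow> P \<oplus> Q*, pr : P \<oplus> Q* \<rightarrow> M with pr \<circ> i = id, i.e. M is a topological direct
  summand of P \<oplus> Q*.\<close>
definition tate_witness ::
  "('r::ring_1 \<Rightarrow> 'm::ab_group_add \<Rightarrow> 'm) \<Rightarrow> 'm topology \<Rightarrow>
   ('r \<Rightarrow> 'p::ab_group_add \<Rightarrow> 'p) \<Rightarrow> ('q::ab_group_add \<Rightarrow> 'r \<Rightarrow> 'q) \<Rightarrow>
   ('m \<Rightarrow> 'p \<times> ('q \<Rightarrow> 'r)) \<Rightarrow> ('p \<times> ('q \<Rightarrow> 'r) \<Rightarrow> 'm) \<Rightarrow> bool" where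
  "tate_witness s \<tau> sP sQ i pr \<longleftrightarrow>
     lmod s \<and> topspace \<tau> = UNIV \<and> lprojective sP \<and> rprojective sQ \<and>
     continuous_map \<tau> (PQ_top sQ) i \<and> continuous_map (PQ_top sQ) \<tau> pr \<and>
     (\<forall>x y. i (x + y) = PQ_add (i x) (i y)) \<and> (\<forall>r x. i (s r x) = PQ_scale sP r (i x)) \<and>
     (\<forall>a\<in>topspace (PQ_top sQ). \<forall>b\<in>topspace (PQ_top sQ). pr (PQ_add a b) = pr a + pr b) \<and>
     (\<forall>r. \<forall>a\<in>topspace (PQ_top sQ). pr (PQ_scale sP r a) = s r (pr a)) \<and>
     (\<forall>x. pr (i x) = x)"

definition lsubmod :: "('r::ring_1 \<Rightarrow> 'm::ab_group_add \<Rightarrow> 'm) \<Rightarrow> 'm set \<Rightarrow> bool" where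
  "lsubmod s L \<longleftrightarrow> 0 \<in> L \<and> (\<forall>x\<in>L. \<forall>y\<in>L. x + y \<in> L) \<and> (\<forall>r. \<forall>x\<in>L. s r x \<in> L)"

text \<open>L/U is finitely generated (U \<subseteq> L submodules).\<close>
definition fg_quotient :: "('r::ring_1 \<Rightarrow> 'm::ab_group_add \<Rightarrow> 'm) \<Rightarrow> 'm set \<Rightarrow> 'm set \<Rightarrow> bool" where
  "fg_quotient s L U \<longleftrightarrow> (\<exists>F. finite F \<and> F \<subseteq> L \<and>
      (\<forall>x\<in>L. \<exists>c :: 'm \<Rightarrow> 'r. x - (\<Sum>f\<in>F. s (c f) f) \<in> U))"

definition lattice :: "('r::ring_1 \<Rightarrow> 'm::ab_group_add \<Rightarrow> 'm) \<Rightarrow> 'm topology \<Rightarrow> 'm set \<Rightarrow> bool" where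
  "lattice s \<tau> L \<longleftrightarrow> openin \<tau> L \<and> lsubmod s L \<and>
     (\<forall>U. openin \<tau> U \<and> lsubmod s U \<and> U \<subseteq> L \<longrightarrow> fg_quotient s L U)"

text \<open>S is a structure of topological R[[t]]-module on M (R[[t]] with the t-adic topology,
  which is the library's metric topology on fps) extending the R-module structure s,
  with the same topology \<tau>, such that t acts as T.\<close>
definition tadic_structure ::
  "('r::ring_1 \<Rightarrow> 'm::ab_group_add \<Rightarrow> 'm) \<Rightarrow> 'm topology \<Rightarrow> ('m \<Rightarrow> 'm) \<Rightarrow>
   ('r fps \<Rightarrow> 'm \<Rightarrow> 'm) \<Rightarrow> bool" where
  "tadic_structure s \<tau> T S \<longleftrightarrow> lmod S \<and>
     (\<forall>r x. S (fps_const r) x = s r x) \<and> (\<forall>x. S fps_X x = T x) \<and>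
     continuous_map (prod_topology euclidean \<tau>) \<tau> (\<lambda>(f, x). S f x) \<and>
     continuous_map (prod_topology \<tau> \<tau>) \<tau> (\<lambda>(x, y). x + y)"

end

theory Submission
  imports Defs "HOL-Library.Function_Algebras"
begin

text \<open>
  For (i) \<open>\<Rightarrow>\<close> (ii), let \<open>f = \<Sum> f\<^sub>n t\<^sup>n\<close> act on \<open>x\<close> as the limit of the partial sums
  \<open>\<Sum>n<N. f\<^sub>n T\<^sup>n x\<close>. Since \<open>M\<close> is a topological direct summand of \<open>P \<oplus> Q*\<close>, which carries
  the topology of pointwise convergence with \<open>P\<close> and \<open>R\<close> discrete, the limit can be computed
  coordinate by coordinate, and a coordinate of the partial sums is eventually constant once the
  open submodule on which it vanishes contains \<open>T\<^sup>n x\<close> for all large \<open>n\<close> and \<open>T\<^sup>n v\<close> for all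
  \<open>n\<close> and all \<open>v\<close> near \<open>0\<close>. Both follow from (i), applied to the lattices obtained from the
  annihilators in \<open>Q*\<close> of finitely many generators of \<open>Q\<close> (they form a basis of neighbourhoods
  of \<open>0\<close> because \<open>Q\<close> is projective) and to their sums with \<open>R x\<close>. The same estimate shows that
  the eventual values are locally constant in \<open>(f, x)\<close>, which gives joint continuity. The module
  axioms pass to the limit, and multiplicativity as well as uniqueness follow because polynomials
  are dense in \<open>R[[t]]\<close>.

  For (ii) \<open>\<Rightarrow>\<close> (i), continuity of the action at \<open>(0, 0)\<close> and \<open>t\<^sup>n \<rightarrow> 0\<close> give a
  neighbourhood \<open>V\<close> of \<open>0\<close> with \<open>T\<^sup>n V \<subseteq> L\<close> for large \<open>n\<close>. A lattice \<open>L'\<close> is generated by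
  finitely many elements modulo an open submodule contained in \<open>V\<close>, and each of these elements
  is eventually mapped into \<open>L\<close>.
\<close>

lemma lmod_add: "lmod s \<Longrightarrow> s r (x + y) = s r x + s r y"
  unfolding lmod_def by blast

lemma lmod_radd: "lmod s \<Longrightarrow> s (r + t) x = s r x + s t x"
  unfolding lmod_def by blast

lemma lmod_mult: "lmod s \<Longrightarrow> s (r * t) x = s r (s t x)"
  unfolding lmod_def by blast

lemma lmod_one: "lmod s \<Longrightarrow> s 1 x = x"
  unfolding lmod_def by blast

lemma lmod_zero: "lmod s \<Longrightarrow> s r 0 = 0"
  using lmod_add[of s r 0 0] by simp

lemma lmod_rzero: "lmod s \<Longrightarrow> s 0 x = 0"
  using lmod_radd[of s 0 0 x] by simp

lemma lmod_rsum: "lmod s \<Longrightarrow> s (\<Sum>a\<in>A. f a) x = (\<Sum>a\<in>A. s (f a) x)"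
  by (induction A rule: infinite_finite_induct) (auto simp: lmod_rzero lmod_radd)

lemma lsubmodD:
  assumes "lsubmod s L"
  shows "0 \<in> L" "x \<in> L \<Longrightarrow> y \<in> L \<Longrightarrow> x + y \<in> L" "x \<in> L \<Longrightarrow> s r x \<in> L"
  using assms unfolding lsubmod_def by blast+

lemma lsubmod_sum: "lsubmod s L \<Longrightarrow> (\<And>a. a \<in> A \<Longrightarrow> f a \<in> L) \<Longrightarrow> (\<Sum>a\<in>A. f a) \<in> L"
  by (induction A rule: infinite_finite_induct) (auto intro: lsubmodD)

lemma lsubmod_Int: "lsubmod s L \<Longrightarrow> lsubmod s U \<Longrightarrow> lsubmod s (L \<inter> U)"
  unfolding lsubmod_def by blast

lemma lsubmod_add_line:
  assumes "lmod s" "lsubmod s L"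
  shows "lsubmod s {l + s r x | l r. l \<in> L}"
  unfolding lsubmod_def
proof (intro conjI ballI allI)
  show "0 \<in> {l + s r x | l r. l \<in> L}"
    using assms by (intro CollectI exI[of _ 0] exI[of _ 0]) (simp add: lmod_rzero lsubmodD)
next
  fix a b assume "a \<in> {l + s r x | l r. l \<in> L}" "b \<in> {l + s r x | l r. l \<in> L}"
  then obtain l1 r1 l2 r2 where "a = l1 + s r1 x" "b = l2 + s r2 x" "l1 \<in> L" "l2 \<in> L"
    by blast
  then show "a + b \<in> {l + s r x | l r. l \<in> L}"
    using assms by (intro CollectI exI[of _ "l1 + l2"] exI[of _ "r1 + r2"])
      (simp add: lmod_radd lsubmodD algebra_simps)
next
  fix c a assume "a \<in> {l + s r x | l r. l \<in> L}"
  then obtain l r where "a = l + s r x" "l \<in> L"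
    by blast
  then show "s c a \<in> {l + s r x | l r. l \<in> L}"
    using assms by (intro CollectI exI[of _ "s c l"] exI[of _ "c * r"])
      (simp add: lmod_add lmod_mult lsubmodD)
qed

lemma fg_quotientI:
  assumes "lmod s" "finite Y" "g ` Y \<subseteq> L"
    and "\<And>x. x \<in> L \<Longrightarrow> \<exists>c. x - (\<Sum>y\<in>Y. s (c y) (g y)) \<in> U"
  shows "fg_quotient s L U"
  unfolding fg_quotient_def
proof (intro exI[of _ "g ` Y"] conjI ballI)
  show "finite (g ` Y)" "g ` Y \<subseteq> L"
    using assms by auto
  fix x assume "x \<in> L"
  then obtain c where c: "x - (\<Sum>y\<in>Y. s (c y) (g y)) \<in> U"
    using assms by blast
  have "(\<Sum>y\<in>Y. s (c y) (g y)) = (\<Sum>f\<in>g ` Y. \<Sum>y\<in>{y\<in>Y. g y = f}. s (c y) (g y))"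
    using sum.image_gen[OF assms(2)] by blast
  also have "\<dots> = (\<Sum>f\<in>g ` Y. s (\<Sum>y\<in>{y\<in>Y. g y = f}. c y) f)"
    by (intro sum.cong refl) (simp add: lmod_rsum[OF assms(1)])
  finally show "\<exists>c. x - (\<Sum>f\<in>g ` Y. s (c f) f) \<in> U"
    using c by (intro exI[of _ "\<lambda>f. \<Sum>y\<in>{y\<in>Y. g y = f}. c y"]) simp
qed

lemma fg_quotient_add_line:
  assumes "lmod s" "fg_quotient s L V" "V \<subseteq> U" "0 \<in> L"
  shows "fg_quotient s {l + s r x | l r. l \<in> L} U"
proof -
  obtain F where F: "finite F" "F \<subseteq> L" "\<And>l. l \<in> L \<Longrightarrow> \<exists>c. l - (\<Sum>f\<in>F. s (c f) f) \<in> V"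
    using assms(2) unfolding fg_quotient_def by blast
  define g where "g = case_option x id"
  show ?thesis
  proof (rule fg_quotientI[OF assms(1), of "insert None (Some ` F)" g])
    show "finite (insert None (Some ` F))"
      using F(1) by simp
    have "x \<in> {l + s r x | l r. l \<in> L}"
      using assms by (intro CollectI exI[of _ 0] exI[of _ 1]) (simp add: lmod_one)
    moreover have "f \<in> {l + s r x | l r. l \<in> L}" if "f \<in> F" for f
      using assms F(2) that by (intro CollectI exI[of _ f] exI[of _ 0]) (auto simp: lmod_rzero)
    ultimately show "g ` insert None (Some ` F) \<subseteq> {l + s r x | l r. l \<in> L}"
      unfolding g_def by auto
  next
    fix z assume "z \<in> {l + s r x | l r. l \<in> L}"
    then obtain l r where z: "z = l + s r x" "l \<in> L"
      by blast
    obtain c where c: "l - (\<Sum>f\<in>F. s (c f) f) \<in> V"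
      using F(3) z(2) by blast
    have "(\<Sum>y\<in>insert None (Some ` F). s (case_option r c y) (g y)) = s r x + (\<Sum>f\<in>F. s (c f) f)"
      using F(1) by (simp add: g_def sum.reindex)
    then have "z - (\<Sum>y\<in>insert None (Some ` F). s (case_option r c y) (g y)) \<in> V"
      using z(1) c by (simp add: algebra_simps)
    then show "\<exists>c. z - (\<Sum>y\<in>insert None (Some ` F). s (c y) (g y)) \<in> U"
      using assms(3) by (intro exI[of _ "case_option r c"]) blast
  qed
qed

lemma rdual_add: "g \<in> rdual sQ \<Longrightarrow> g (x + y) = g x + g y"
  unfolding rdual_def by blast

lemma rdual_scale: "g \<in> rdual sQ \<Longrightarrow> g (sQ x r) = g x * r"
  unfolding rdual_def by blast

lemma continuous_map_to_discreteI:
  fixes g :: "'a \<Rightarrow> 'b"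
  assumes "\<And>z. z \<in> topspace X \<Longrightarrow> \<exists>U. openin X U \<and> z \<in> U \<and> (\<forall>w\<in>U. g w = g z)"
  shows "continuous_map X (discrete_topology UNIV) g"
  unfolding continuous_map_def
proof (intro conjI allI impI)
  fix S :: "'b set" assume "openin (discrete_topology UNIV) S"
  show "openin X {x \<in> topspace X. g x \<in> S}"
  proof (subst openin_subopen, intro ballI)
    fix z assume z: "z \<in> {x \<in> topspace X. g x \<in> S}"
    then obtain U where U: "openin X U" "z \<in> U" "\<forall>w\<in>U. g w = g z"
      using assms by blast
    have "U \<subseteq> {x \<in> topspace X. g x \<in> S}"
      using z U(3) openin_subset[OF U(1)] by auto
    then show "\<exists>T. openin X T \<and> z \<in> T \<and> T \<subseteq> {x \<in> topspace X. g x \<in> S}"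
      using U by blast
  qed
qed auto

lemma continuous_map_slice_left:
  assumes "continuous_map (prod_topology X Y) Z (\<lambda>(a, b). g a b)" "b \<in> topspace Y"
  shows "continuous_map X Z (\<lambda>a. g a b)"
proof -
  have "continuous_map X (prod_topology X Y) (\<lambda>a. (a, b))"
    using assms(2) by (intro continuous_map_pairedI) simp_all
  from continuous_map_compose[OF this assms(1)] show ?thesis
    by (simp add: o_def)
qed

text \<open>Arbitrary if the sequence is not eventually constant.\<close>
definition eventual_value :: "(nat \<Rightarrow> 'a) \<Rightarrow> 'a" where
  "eventual_value a = (THE c. \<forall>\<^sub>F n in sequentially. a n = c)"

lemma eventual_value_eqI:
  assumes "\<forall>\<^sub>F n in sequentially. a n = c"
  shows "eventual_value a = c"
  unfolding eventual_value_def
proof (rule the_equality)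
  fix d assume "\<forall>\<^sub>F n in sequentially. a n = d"
  with assms have "\<forall>\<^sub>F n in sequentially. d = c"
    by eventually_elim simp
  then show "d = c"
    by simp
qed (fact assms)

lemma continuous_fps_mult_right: "continuous_on UNIV (\<lambda>f :: 'a::ring_1 fps. f * g)"
proof (intro continuous_at_imp_continuous_on ballI)
  fix f :: "'a fps"
  have "((\<lambda>f'. f' * g) \<longlongrightarrow> f * g) (nhds f)"
  proof (rule tendsto_fpsI)
    fix n
    show "\<forall>\<^sub>F f' in nhds f. fps_nth (f' * g) n = fps_nth (f * g) n"
      using eventually_fps_nth_eq_nhds_fps_strong[of n f]
      by eventually_elim (auto simp: fps_mult_nth intro!: sum.cong)
  qed
  moreover have "at f \<le> nhds f"
    by (simp add: at_within_def)
  ultimately show "isCont (\<lambda>f'. f' * g) f"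
    unfolding isCont_def by (rule tendsto_mono[rotated])
qed

lemma tendsto_fps_X_power: "(\<lambda>n. fps_X ^ n :: 'a::ring_1 fps) \<longlonglongrightarrow> 0"
proof (rule tendsto_fpsI)
  fix k
  show "\<forall>\<^sub>F n in sequentially. fps_nth (fps_X ^ n :: 'a fps) k = fps_nth 0 k"
    using eventually_gt_at_top[of k] by eventually_elim simp
qed

lemma fps_additive_continuous_eqI:
  fixes \<Phi> \<Psi> :: "'a::ring_1 fps \<Rightarrow> 'b::ab_group_add"
  assumes "Hausdorff_space X" "Modules.additive \<Phi>" "Modules.additive \<Psi>"
    and "continuous_map euclidean X \<Phi>" "continuous_map euclidean X \<Psi>"
    and "\<And>c n. \<Phi> (fps_const c * fps_X ^ n) = \<Psi> (fps_const c * fps_X ^ n)"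
  shows "\<Phi> f = \<Psi> f"
proof -
  let ?t = "\<lambda>n. \<Sum>k = 0..n. fps_const (fps_nth f k) * fps_X ^ k"
  have t: "limitin euclidean ?t f sequentially"
    using fps_notation[of f] by (simp add: limitin_canonical_iff)
  have "\<Phi> \<circ> ?t = \<Psi> \<circ> ?t"
    by (simp add: fun_eq_iff Modules.additive.sum[OF assms(2)] Modules.additive.sum[OF assms(3)] assms(6))
  then show ?thesis
    using continuous_map_limit[OF assms(4) t] continuous_map_limit[OF assms(5) t]
    by (metis limitin_Hausdorff_unique[OF _ _ trivial_limit_sequentially assms(1)])
qed

section \<open>The topology of a Tate module\<close>

locale tate_module =
  fixes s :: "'r::ring_1 \<Rightarrow> 'm::ab_group_add \<Rightarrow> 'm"
    and \<tau> :: "'m topology"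
    and sP :: "'r \<Rightarrow> 'p::ab_group_add \<Rightarrow> 'p"
    and sQ :: "'q::ab_group_add \<Rightarrow> 'r \<Rightarrow> 'q"
    and i :: "'m \<Rightarrow> 'p \<times> ('q \<Rightarrow> 'r)"
    and pr :: "'p \<times> ('q \<Rightarrow> 'r) \<Rightarrow> 'm"
  assumes tate: "tate_witness s \<tau> sP sQ i pr"
begin

lemma lmod_s: "lmod s"
  using tate unfolding tate_witness_def by blast

lemma topspace_tau [simp]: "topspace \<tau> = UNIV"
  using tate unfolding tate_witness_def by blast

lemma lmod_sP: "lmod sP"
  using tate unfolding tate_witness_def lprojective_def by blast

lemma continuous_map_i: "continuous_map \<tau> (PQ_top sQ) i"
  using tate unfolding tate_witness_def by blast

lemma continuous_map_pr: "continuous_map (PQ_top sQ) \<tau> pr"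
  using tate unfolding tate_witness_def by blast

lemma pr_i [simp]: "pr (i x) = x"
  using tate unfolding tate_witness_def by blast

lemma topspace_PQ_top: "topspace (PQ_top sQ) = UNIV \<times> rdual sQ"
  by (simp add: PQ_top_def rdual_top_def topspace_subtopology topspace_product_topology)

lemma pr_add:
  assumes "g \<in> rdual sQ" "h \<in> rdual sQ"
  shows "pr (a + b, g + h) = pr (a, g) + pr (b, h)"
proof -
  have "\<forall>u\<in>UNIV \<times> rdual sQ. \<forall>v\<in>UNIV \<times> rdual sQ. pr (PQ_add u v) = pr u + pr v"
    using tate unfolding tate_witness_def topspace_PQ_top by blast
  then have "pr (PQ_add (a, g) (b, h)) = pr (a, g) + pr (b, h)"
    using assms by blast
  then show ?thesis
    by (simp add: PQ_add_def plus_fun_def)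
qed

lemma pr_scale:
  assumes "g \<in> rdual sQ"
  shows "pr (sP r a, \<lambda>q. r * g q) = s r (pr (a, g))"
proof -
  have "\<forall>r. \<forall>u\<in>UNIV \<times> rdual sQ. pr (PQ_scale sP r u) = s r (pr u)"
    using tate unfolding tate_witness_def topspace_PQ_top by blast
  then show ?thesis
    using assms by (auto simp: PQ_scale_def)
qed

lemma snd_i_in_rdual: "snd (i x) \<in> rdual sQ"
proof -
  have "i x \<in> UNIV \<times> rdual sQ"
    using continuous_map_i unfolding continuous_map_def topspace_PQ_top by auto
  then show ?thesis
    by (simp add: mem_Times_iff)
qed

lemma additive_fst_i: "Modules.additive (\<lambda>x. fst (i x))"
  using tate unfolding tate_witness_def PQ_add_def Modules.additive_def by simp

lemma additive_snd_i: "Modules.additive (\<lambda>x. snd (i x) q)"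
  using tate unfolding tate_witness_def PQ_add_def Modules.additive_def by simp

lemma fst_i_scale [simp]: "fst (i (s r x)) = sP r (fst (i x))"
  using tate unfolding tate_witness_def PQ_scale_def by simp

lemma snd_i_scale [simp]: "snd (i (s r x)) q = r * snd (i x) q"
  using tate unfolding tate_witness_def PQ_scale_def by simp

lemma pr_zero [simp]: "pr (0, 0) = 0"
proof -
  have "i 0 = (0, 0)"
    using Modules.additive.zero[OF additive_fst_i] Modules.additive.zero[OF additive_snd_i]
    by (simp add: prod_eq_iff fun_eq_iff)
  then show ?thesis
    using pr_i[of 0] by simp
qed

definition basic_nbhd :: "'q set \<Rightarrow> 'm \<Rightarrow> 'm set" where
  "basic_nbhd F x = {y. fst (i y) = fst (i x) \<and> (\<forall>q\<in>F. snd (i y) q = snd (i x) q)}"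

lemma mem_basic_nbhd_self [simp]: "x \<in> basic_nbhd F x"
  by (simp add: basic_nbhd_def)

lemma openin_basic_nbhd:
  assumes "finite F"
  shows "openin \<tau> (basic_nbhd F x)"
proof -
  let ?B = "{h :: 'q \<Rightarrow> 'r. \<forall>q\<in>F. h q = snd (i x) q}"
  have "?B = Pi\<^sub>E UNIV (\<lambda>q. if q \<in> F then {snd (i x) q} else UNIV)"
    by (auto simp: PiE_iff split: if_splits)
  moreover have "openin (product_topology (\<lambda>_. discrete_topology (UNIV::'r set)) UNIV)
      (Pi\<^sub>E UNIV (\<lambda>q. if q \<in> F then {snd (i x) q} else UNIV))"
    by (intro product_topology_basis) (auto intro: finite_subset[OF _ assms])
  ultimately have "openin (rdual_top sQ) (rdual sQ \<inter> ?B)"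
    unfolding rdual_top_def by (simp add: openin_subtopology_Int2)
  then have "openin (PQ_top sQ) ({fst (i x)} \<times> (rdual sQ \<inter> ?B))"
    unfolding PQ_top_def openin_prod_Times_iff by simp
  from openin_continuous_map_preimage[OF continuous_map_i this]
  show ?thesis
    using snd_i_in_rdual by (simp add: basic_nbhd_def mem_Times_iff conj_commute)
qed

lemma pr_open_finite_agreement:
  assumes W: "openin \<tau> W" and g0: "g0 \<in> rdual sQ" and "pr (a, g0) \<in> W"
  shows "\<exists>F. finite F \<and> (\<forall>g\<in>rdual sQ. (\<forall>q\<in>F. g q = g0 q) \<longrightarrow> pr (a, g) \<in> W)"
proof -
  let ?A = "{z \<in> topspace (PQ_top sQ). pr z \<in> W}"
  have "openin (PQ_top sQ) ?A"
    using openin_continuous_map_preimage[OF continuous_map_pr W] .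
  moreover have "(a, g0) \<in> ?A"
    using assms by (simp add: topspace_PQ_top)
  ultimately obtain U V where UV: "openin (rdual_top sQ) V" "a \<in> U" "g0 \<in> V" "U \<times> V \<subseteq> ?A"
    unfolding PQ_top_def openin_prod_topology_alt by meson
  obtain B where B: "openin (product_topology (\<lambda>_. discrete_topology (UNIV::'r set)) UNIV) B"
      "V = B \<inter> rdual sQ"
    using UV(1) unfolding rdual_top_def openin_subtopology by blast
  then obtain C where C: "finite {q \<in> UNIV. C q \<noteq> topspace (discrete_topology (UNIV::'r set))}"
      "g0 \<in> Pi\<^sub>E UNIV C" "Pi\<^sub>E UNIV C \<subseteq> B"
    using UV(3) unfolding openin_product_topology_alt by blast
  show ?thesis
  proof (intro exI[of _ "{q. C q \<noteq> UNIV}"] conjI ballI impI)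
    show "finite {q. C q \<noteq> UNIV}"
      using C(1) by simp
    fix g assume g: "g \<in> rdual sQ" "\<forall>q\<in>{q. C q \<noteq> UNIV}. g q = g0 q"
    have "g q \<in> C q" for q
      using g(2) C(2) by (cases "C q = UNIV") (auto simp: PiE_iff)
    then have "g \<in> V"
      using C(3) B(2) g(1) by (auto simp: PiE_iff)
    then show "pr (a, g) \<in> W"
      using UV(2,4) by blast
  qed
qed

lemma openin_iff_basic_nbhd:
  "openin \<tau> W \<longleftrightarrow> (\<forall>x\<in>W. \<exists>F. finite F \<and> basic_nbhd F x \<subseteq> W)"
proof
  assume W: "openin \<tau> W"
  show "\<forall>x\<in>W. \<exists>F. finite F \<and> basic_nbhd F x \<subseteq> W"
  proof
    fix x assume "x \<in> W"
    then have "pr (fst (i x), snd (i x)) \<in> W"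
      by simp
    then obtain F where F: "finite F"
        "\<forall>g\<in>rdual sQ. (\<forall>q\<in>F. g q = snd (i x) q) \<longrightarrow> pr (fst (i x), g) \<in> W"
      using pr_open_finite_agreement[OF W snd_i_in_rdual] by blast
    have "y \<in> W" if "y \<in> basic_nbhd F x" for y
      using F(2) snd_i_in_rdual[of y] that pr_i[of y] unfolding basic_nbhd_def
      by (metis (mono_tags, lifting) mem_Collect_eq prod.collapse)
    then show "\<exists>F. finite F \<and> basic_nbhd F x \<subseteq> W"
      using F(1) by blast
  qed
next
  assume "\<forall>x\<in>W. \<exists>F. finite F \<and> basic_nbhd F x \<subseteq> W"
  then show "openin \<tau> W"
    by (subst openin_subopen) (meson mem_basic_nbhd_self openin_basic_nbhd)
qed

lemma continuous_map_basic_nbhdI: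
  assumes "\<And>x F. finite F \<Longrightarrow> \<exists>G. finite G \<and> g ` basic_nbhd G x \<subseteq> basic_nbhd F (g x)"
  shows "continuous_map \<tau> \<tau> g"
  unfolding continuous_map_def topspace_tau
proof (intro conjI allI impI)
  fix W assume W: "openin \<tau> W"
  show "openin \<tau> {x \<in> UNIV. g x \<in> W}"
    unfolding openin_iff_basic_nbhd
  proof
    fix x assume "x \<in> {x \<in> UNIV. g x \<in> W}"
    then obtain F where F: "finite F" "basic_nbhd F (g x) \<subseteq> W"
      using W unfolding openin_iff_basic_nbhd by auto
    obtain G where G: "finite G" "g ` basic_nbhd G x \<subseteq> basic_nbhd F (g x)"
      using assms[OF F(1)] by blast
    have "basic_nbhd G x \<subseteq> {x \<in> UNIV. g x \<in> W}"
      using G(2) F(2) by fastforce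
    then show "\<exists>G. finite G \<and> basic_nbhd G x \<subseteq> {x \<in> UNIV. g x \<in> W}"
      using G(1) by blast
  qed
qed simp

lemma continuous_map_scale: "continuous_map \<tau> \<tau> (s r)"
  by (rule continuous_map_basic_nbhdI) (auto simp: basic_nbhd_def)

lemma continuous_map_translate: "continuous_map \<tau> \<tau> (\<lambda>y. y + a)"
  by (rule continuous_map_basic_nbhdI)
    (auto simp: basic_nbhd_def Modules.additive.add[OF additive_fst_i] Modules.additive.add[OF additive_snd_i])

lemma openin_translate: "openin \<tau> V \<Longrightarrow> openin \<tau> {y. y - a \<in> V}"
  using openin_continuous_map_preimage[OF continuous_map_translate[of "- a"], of V] by simp

lemma continuous_map_add: "continuous_map (prod_topology \<tau> \<tau>) \<tau> (\<lambda>(x, y). x + y)"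
  unfolding continuous_map_def
proof (intro conjI allI impI)
  fix W assume W: "openin \<tau> W"
  show "openin (prod_topology \<tau> \<tau>) {z \<in> topspace (prod_topology \<tau> \<tau>). (\<lambda>(x, y). x + y) z \<in> W}"
  proof (subst openin_subopen, intro ballI)
    fix z assume "z \<in> {z \<in> topspace (prod_topology \<tau> \<tau>). (\<lambda>(x, y). x + y) z \<in> W}"
    then obtain a b where z: "z = (a, b)" "a + b \<in> W"
      by (cases z) auto
    then obtain F where F: "finite F" "basic_nbhd F (a + b) \<subseteq> W"
      using W unfolding openin_iff_basic_nbhd by blast
    have "basic_nbhd F a \<times> basic_nbhd F b \<subseteq> {z \<in> topspace (prod_topology \<tau> \<tau>). (\<lambda>(x, y). x + y) z \<in> W}"
      using F(2) by (auto simp: basic_nbhd_def Modules.additive.add[OF additive_fst_i]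
          Modules.additive.add[OF additive_snd_i])
    then show "\<exists>T. openin (prod_topology \<tau> \<tau>) T \<and> z \<in> T \<and>
        T \<subseteq> {z \<in> topspace (prod_topology \<tau> \<tau>). (\<lambda>(x, y). x + y) z \<in> W}"
      using F(1) z(1) by (intro exI[of _ "basic_nbhd F a \<times> basic_nbhd F b"])
        (simp add: openin_prod_Times_iff openin_basic_nbhd)
  qed
qed simp

lemma Hausdorff_space_tau: "Hausdorff_space \<tau>"
proof (rule Hausdorff_space_injective_preimage[OF _ continuous_map_i])
  have "Hausdorff_space (product_topology (\<lambda>_. discrete_topology (UNIV::'r set)) (UNIV::'q set))"
    by (simp add: Hausdorff_space_product_topology)
  then show "Hausdorff_space (PQ_top sQ)"
    unfolding PQ_top_def rdual_top_def
    by (simp add: Hausdorff_space_prod_topology Hausdorff_space_subtopology)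
  show "inj_on i (topspace \<tau>)"
    by (metis inj_on_inverseI pr_i)
qed

lemma limitin_tau_unique:
  "limitin \<tau> a l sequentially \<Longrightarrow> limitin \<tau> a l' sequentially \<Longrightarrow> l = l'"
  by (rule limitin_Hausdorff_unique[OF _ _ trivial_limit_sequentially Hausdorff_space_tau])

lemma limitin_add:
  assumes "limitin \<tau> a l F" "limitin \<tau> b l' F"
  shows "limitin \<tau> (\<lambda>N. a N + b N) (l + l') F"
proof -
  have "limitin (prod_topology \<tau> \<tau>) (\<lambda>N. (a N, b N)) (l, l') F"
    using assms by (simp add: limitin_pairwise o_def)
  from continuous_map_limit[OF continuous_map_add this] show ?thesis
    by (simp add: o_def)
qed

lemma limitin_pr:
  assumes "snd l \<in> rdual sQ"
    and "\<forall>\<^sub>F n in F. fst (i (a n)) = fst l" "\<And>q. \<forall>\<^sub>F n in F. snd (i (a n)) q = snd l q"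
  shows "limitin \<tau> a (pr l) F"
proof -
  have discrete: "limitin (discrete_topology UNIV) b c F" if "\<forall>\<^sub>F n in F. b n = c" for b c
    using that unfolding limitin_def by (auto elim: eventually_mono)
  have "limitin (PQ_top sQ) (\<lambda>n. i (a n)) l F"
    unfolding PQ_top_def limitin_pairwise rdual_top_def limitin_subtopology limitin_componentwise
    using assms snd_i_in_rdual by (auto intro!: discrete simp: o_def)
  from continuous_map_limit[OF continuous_map_pr this] show ?thesis
    by (simp add: o_def)
qed

lemma fst_i_kernel: "openin \<tau> {z. fst (i z) = 0}" "lsubmod s {z. fst (i z) = 0}"
proof -
  show "openin \<tau> {z. fst (i z) = 0}"
    unfolding openin_iff_basic_nbhd by (auto simp: basic_nbhd_def intro!: exI[of _ "{}"])
  show "lsubmod s {z. fst (i z) = 0}"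
    unfolding lsubmod_def
    by (simp add: Modules.additive.zero[OF additive_fst_i] Modules.additive.add[OF additive_fst_i]
        lmod_zero[OF lmod_sP])
qed

lemma snd_i_kernel: "openin \<tau> {z. snd (i z) q = 0}" "lsubmod s {z. snd (i z) q = 0}"
proof -
  show "openin \<tau> {z. snd (i z) q = 0}"
    unfolding openin_iff_basic_nbhd by (auto simp: basic_nbhd_def intro!: exI[of _ "{q}"])
  show "lsubmod s {z. snd (i z) q = 0}"
    unfolding lsubmod_def
    by (simp add: Modules.additive.zero[OF additive_snd_i] Modules.additive.add[OF additive_snd_i])
qed

end

section \<open>Basic lattices\<close>

context tate_module
begin

text \<open>By projectivity, \<open>Q\<close> is a direct summand of the free module on its underlying set;
  \<open>coord q\<close> is the image of \<open>q\<close> there.\<close>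
definition coord :: "'q \<Rightarrow> 'q \<Rightarrow> 'r" where
  "coord = (SOME \<sigma>. (\<forall>x. finite {y. \<sigma> x y \<noteq> 0}) \<and>
      (\<forall>x y. \<sigma> (x + y) = (\<lambda>z. \<sigma> x z + \<sigma> y z)) \<and>
      (\<forall>r x. \<sigma> (sQ x r) = (\<lambda>z. \<sigma> x z * r)) \<and>
      (\<forall>x. (\<Sum>y\<in>{y. \<sigma> x y \<noteq> 0}. sQ y (\<sigma> x y)) = x))"

definition coord_supp :: "'q \<Rightarrow> 'q set" where
  "coord_supp q = {y. coord q y \<noteq> 0}"

lemma coord_spec:
  "(\<forall>x. finite (coord_supp x)) \<and> (\<forall>x y. coord (x + y) = (\<lambda>z. coord x z + coord y z)) \<and>
   (\<forall>r x. coord (sQ x r) = (\<lambda>z. coord x z * r)) \<and>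
   (\<forall>x. (\<Sum>y\<in>coord_supp x. sQ y (coord x y)) = x)"
proof -
  have "\<exists>\<sigma> :: 'q \<Rightarrow> 'q \<Rightarrow> 'r. (\<forall>x. finite {y. \<sigma> x y \<noteq> 0}) \<and>
      (\<forall>x y. \<sigma> (x + y) = (\<lambda>z. \<sigma> x z + \<sigma> y z)) \<and>
      (\<forall>r x. \<sigma> (sQ x r) = (\<lambda>z. \<sigma> x z * r)) \<and>
      (\<forall>x. (\<Sum>y\<in>{y. \<sigma> x y \<noteq> 0}. sQ y (\<sigma> x y)) = x)"
    using tate unfolding tate_witness_def rprojective_def by blast
  then show ?thesis
    unfolding coord_def coord_supp_def by (rule someI_ex)
qed

lemma finite_coord_supp [simp]: "finite (coord_supp q)"
  using coord_spec by blast

lemma coord_add: "coord (x + y) z = coord x z + coord y z"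
  using coord_spec by metis

lemma coord_scale: "coord (sQ x r) z = coord x z * r"
  using coord_spec by metis

lemma coord_expansion: "(\<Sum>y\<in>coord_supp q. sQ y (coord q y)) = q"
  using coord_spec by blast

text \<open>The functional with value \<open>h y\<close> on the generator \<open>y\<close>.\<close>
definition functional :: "('q \<Rightarrow> 'r) \<Rightarrow> 'q \<Rightarrow> 'r" where
  "functional h q = (\<Sum>y\<in>coord_supp q. h y * coord q y)"

lemma functional_eq_sum:
  "finite Z \<Longrightarrow> coord_supp q \<subseteq> Z \<Longrightarrow> functional h q = (\<Sum>y\<in>Z. h y * coord q y)"
  unfolding functional_def by (rule sum.mono_neutral_left) (auto simp: coord_supp_def)

lemma functional_in_rdual: "functional h \<in> rdual sQ"
  unfolding rdual_def
proof (intro CollectI conjI allI)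
  fix x y
  let ?Z = "coord_supp x \<union> coord_supp y \<union> coord_supp (x + y)"
  have "functional h (x + y) = (\<Sum>z\<in>?Z. h z * coord (x + y) z)"
    by (rule functional_eq_sum) auto
  also have "\<dots> = (\<Sum>z\<in>?Z. h z * coord x z) + (\<Sum>z\<in>?Z. h z * coord y z)"
    by (simp add: coord_add distrib_left sum.distrib)
  also have "\<dots> = functional h x + functional h y"
  proof -
    have Z: "finite ?Z" "coord_supp x \<subseteq> ?Z" "coord_supp y \<subseteq> ?Z"
      by auto
    show ?thesis
      by (simp add: functional_eq_sum[OF Z(1,2)] functional_eq_sum[OF Z(1,3)])
  qed
  finally show "functional h (x + y) = functional h x + functional h y" .
next
  fix x r
  have "coord_supp (sQ x r) \<subseteq> coord_supp x"
    by (auto simp: coord_supp_def coord_scale)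
  then have "functional h (sQ x r) = (\<Sum>z\<in>coord_supp x. h z * coord x z * r)"
    by (simp add: functional_eq_sum[OF finite_coord_supp] coord_scale mult.assoc)
  then show "functional h (sQ x r) = functional h x * r"
    by (simp add: functional_def sum_distrib_right)
qed

lemma functional_rdual: "g \<in> rdual sQ \<Longrightarrow> functional g = g"
proof
  fix q assume g: "g \<in> rdual sQ"
  then have "Modules.additive g"
    unfolding rdual_def Modules.additive_def by blast
  then have "g q = (\<Sum>y\<in>coord_supp q. g (sQ y (coord q y)))"
    using Modules.additive.sum coord_expansion by metis
  then show "functional g q = g q"
    using g unfolding functional_def rdual_def by simp
qed

lemma functional_add: "functional (h1 + h2) = functional h1 + functional h2"
  by (simp add: fun_eq_iff functional_def distrib_right sum.distrib)

lemma functional_scale: "functional (\<lambda>y. r * h y) = (\<lambda>q. r * functional h q)"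
  by (simp add: fun_eq_iff functional_def sum_distrib_left mult.assoc)

lemma functional_eq_zero: "(\<And>y. y \<in> coord_supp q \<Longrightarrow> h y = 0) \<Longrightarrow> functional h q = 0"
  unfolding functional_def by simp

definition dual_elem :: "('q \<Rightarrow> 'r) \<Rightarrow> 'm" where
  "dual_elem h = pr (0, functional h)"

lemma additive_dual_elem: "Modules.additive dual_elem"
  unfolding Modules.additive_def dual_elem_def
  using pr_add[OF functional_in_rdual functional_in_rdual, of 0 0] by (simp add: functional_add)

lemma dual_elem_scale: "dual_elem (\<lambda>y. r * h y) = s r (dual_elem h)"
  using pr_scale[OF functional_in_rdual, of r 0 h]
  by (simp add: dual_elem_def functional_scale lmod_zero[OF lmod_sP])

lemma dual_elem_snd_i: "fst (i z) = 0 \<Longrightarrow> dual_elem (snd (i z)) = z"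
  using pr_i[of z] by (metis dual_elem_def functional_rdual snd_i_in_rdual prod.collapse)

lemma dual_elem_sum_delta:
  assumes "finite Y"
  shows "(\<Sum>y\<in>Y. s (h y) (dual_elem (\<lambda>z. if z = y then 1 else 0))) =
    dual_elem (\<lambda>z. if z \<in> Y then h z else 0)"
  using assms
proof (induction Y rule: finite_induct)
  case empty
  show ?case
    using Modules.additive.zero[OF additive_dual_elem] by (simp add: zero_fun_def)
next
  case (insert y Y)
  have "(\<lambda>z. if z \<in> insert y Y then h z else 0) =
      (\<lambda>z. h y * (if z = y then 1 else 0)) + (\<lambda>z. if z \<in> Y then h z else 0)"
    using insert(2) by (auto simp: fun_eq_iff)
  then show ?case
    using insert by (simp add: Modules.additive.add[OF additive_dual_elem] dual_elem_scale)
qed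

definition basic_lattice :: "'q set \<Rightarrow> 'm set" where
  "basic_lattice B = dual_elem ` {h. \<forall>y\<in>B. h y = 0}"

lemma lsubmod_basic_lattice: "lsubmod s (basic_lattice B)"
  unfolding lsubmod_def basic_lattice_def
proof (intro conjI ballI allI)
  show "0 \<in> dual_elem ` {h. \<forall>y\<in>B. h y = 0}"
    using Modules.additive.zero[OF additive_dual_elem] by (intro image_eqI[of _ _ 0]) auto
  fix a b assume "a \<in> dual_elem ` {h. \<forall>y\<in>B. h y = 0}" "b \<in> dual_elem ` {h. \<forall>y\<in>B. h y = 0}"
  then show "a + b \<in> dual_elem ` {h. \<forall>y\<in>B. h y = 0}"
    by (auto simp: Modules.additive.add[OF additive_dual_elem, symmetric])
next
  fix r a assume "a \<in> dual_elem ` {h. \<forall>y\<in>B. h y = 0}"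
  then show "s r a \<in> dual_elem ` {h. \<forall>y\<in>B. h y = 0}"
    by (auto simp: dual_elem_scale[symmetric])
qed

lemma basic_lattice_subset:
  assumes "openin \<tau> W" "0 \<in> W"
  shows "\<exists>C. finite C \<and> basic_lattice C \<subseteq> W"
proof -
  have "0 \<in> rdual sQ" "pr (0, 0) \<in> W"
    using assms(2) by (simp_all add: rdual_def)
  then obtain F where F: "finite F" "\<forall>g\<in>rdual sQ. (\<forall>q\<in>F. g q = 0 q) \<longrightarrow> pr (0, g) \<in> W"
    using pr_open_finite_agreement[OF assms(1)] by blast
  have "dual_elem h \<in> W" if "\<forall>y\<in>\<Union>(coord_supp ` F). h y = 0" for h
  proof -
    have "\<forall>q\<in>F. functional h q = 0 q"
      using that by (auto intro: functional_eq_zero)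
    then show ?thesis
      using F(2) functional_in_rdual unfolding dual_elem_def by blast
  qed
  then show ?thesis
    using F(1) unfolding basic_lattice_def by (intro exI[of _ "\<Union>(coord_supp ` F)"]) auto
qed

lemma openin_basic_lattice:
  assumes "finite B"
  shows "openin \<tau> (basic_lattice B)"
  unfolding openin_iff_basic_nbhd
proof (intro ballI exI[of _ B] conjI subsetI)
  fix x y assume x: "x \<in> basic_lattice B" and y: "y \<in> basic_nbhd B x"
  have "fst (i (y - x)) = 0" "\<forall>q\<in>B. snd (i (y - x)) q = 0"
    using y by (simp_all add: basic_nbhd_def Modules.additive.diff[OF additive_fst_i]
        Modules.additive.diff[OF additive_snd_i])
  moreover from this(1) have "y - x = dual_elem (snd (i (y - x)))"
    by (simp add: dual_elem_snd_i)
  ultimately have "y - x \<in> basic_lattice B"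
    unfolding basic_lattice_def by auto
  then have "(y - x) + x \<in> basic_lattice B"
    using x lsubmod_basic_lattice by (blast intro: lsubmodD)
  then show "y \<in> basic_lattice B"
    by simp
qed (use assms in simp)

lemma fg_quotient_basic_lattice:
  assumes U: "openin \<tau> U" "lsubmod s U"
  shows "fg_quotient s (basic_lattice B) U"
proof -
  obtain C where C: "finite C" "basic_lattice C \<subseteq> U"
    using basic_lattice_subset[OF U(1) lsubmodD(1)[OF U(2)]] by blast
  define \<delta> where "\<delta> y = dual_elem (\<lambda>z. if z = y then 1 else 0)" for y
  show ?thesis
  proof (rule fg_quotientI[OF lmod_s, of "C - B" \<delta>])
    show "finite (C - B)"
      using C(1) by simp
    show "\<delta> ` (C - B) \<subseteq> basic_lattice B"
      unfolding \<delta>_def basic_lattice_def by auto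
    fix x assume "x \<in> basic_lattice B"
    then obtain h where h: "x = dual_elem h" "\<forall>y\<in>B. h y = 0"
      unfolding basic_lattice_def by blast
    have "x - (\<Sum>y\<in>C - B. s (h y) (\<delta> y)) = dual_elem (\<lambda>z. h z - (if z \<in> C - B then h z else 0))"
      using C(1) unfolding h(1) \<delta>_def
      by (simp add: dual_elem_sum_delta Modules.additive.diff[OF additive_dual_elem, symmetric]
          fun_diff_def)
    also have "\<dots> \<in> basic_lattice C"
      using h(2) unfolding basic_lattice_def by auto
    finally show "\<exists>c. x - (\<Sum>y\<in>C - B. s (c y) (\<delta> y)) \<in> U"
      using C(2) by blast
  qed
qed

lemma lattice_basic_lattice: "finite B \<Longrightarrow> lattice s \<tau> (basic_lattice B)"
  unfolding lattice_def
  using openin_basic_lattice lsubmod_basic_lattice fg_quotient_basic_lattice by blast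

lemma lattice_fg_modulo_open:
  assumes "lattice s \<tau> L" "openin \<tau> V" "0 \<in> V"
  shows "\<exists>G. finite G \<and> (\<forall>x\<in>L. \<exists>c. x - (\<Sum>g\<in>G. s (c g) g) \<in> V)"
proof -
  have "openin \<tau> (V \<inter> L)" "0 \<in> V \<inter> L"
    using assms lsubmodD(1) unfolding lattice_def by auto
  then obtain C where C: "finite C" "basic_lattice C \<subseteq> V \<inter> L"
    using basic_lattice_subset by blast
  then have "fg_quotient s L (basic_lattice C)"
    using assms(1) openin_basic_lattice lsubmod_basic_lattice unfolding lattice_def by blast
  then obtain G where "finite G" "\<forall>x\<in>L. \<exists>c. x - (\<Sum>g\<in>G. s (c g) g) \<in> basic_lattice C"
    unfolding fg_quotient_def by blast
  then show ?thesis
    using C(2) by blast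
qed

lemma openin_add_closed:
  assumes "openin \<tau> L" "0 \<in> L" "\<And>a l. a \<in> A \<Longrightarrow> l \<in> L \<Longrightarrow> a + l \<in> A"
  shows "openin \<tau> A"
proof (subst openin_subopen, intro ballI)
  fix a assume "a \<in> A"
  then have "{y. y - a \<in> L} \<subseteq> A"
    using assms(3) by (metis add.commute diff_add_cancel mem_Collect_eq subsetI)
  then show "\<exists>T. openin \<tau> T \<and> a \<in> T \<and> T \<subseteq> A"
    using openin_translate[OF assms(1)] assms(2) by (intro exI[of _ "{y. y - a \<in> L}"]) auto
qed

lemma lattice_add_line:
  assumes "lattice s \<tau> L"
  shows "lattice s \<tau> {l + s r x | l r. l \<in> L}"
proof -
  have L: "openin \<tau> L" "lsubmod s L"
    and fg: "\<And>U. openin \<tau> U \<Longrightarrow> lsubmod s U \<Longrightarrow> U \<subseteq> L \<Longrightarrow> fg_quotient s L U"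
    using assms unfolding lattice_def by auto
  have "openin \<tau> {l + s r x | l r. l \<in> L}"
  proof (rule openin_add_closed[OF L(1) lsubmodD(1)[OF L(2)]])
    fix a l assume "a \<in> {l + s r x | l r. l \<in> L}" "l \<in> L"
    then obtain l' r where "a = l' + s r x" "l' + l \<in> L"
      using L(2) by (auto intro: lsubmodD)
    then show "a + l \<in> {l + s r x | l r. l \<in> L}"
      by (intro CollectI exI[of _ "l' + l"] exI[of _ r]) (simp add: algebra_simps)
  qed
  moreover have "fg_quotient s {l + s r x | l r. l \<in> L} U" if "openin \<tau> U" "lsubmod s U" for U
  proof -
    have "fg_quotient s L (U \<inter> L)"
      using that L by (intro fg) (auto simp: openin_Int lsubmod_Int)
    then show ?thesis
      using fg_quotient_add_line[OF lmod_s _ Int_lower1 lsubmodD(1)[OF L(2)]] by blast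
  qed
  ultimately show ?thesis
    unfolding lattice_def using lsubmod_add_line[OF lmod_s L(2)] by blast
qed

end

section \<open>Topologically nilpotent operators\<close>

definition topologically_nilpotent ::
  "('r::ring_1 \<Rightarrow> 'm::ab_group_add \<Rightarrow> 'm) \<Rightarrow> 'm topology \<Rightarrow> ('m \<Rightarrow> 'm) \<Rightarrow> bool" where
  "topologically_nilpotent s \<tau> T \<longleftrightarrow>
     (\<forall>L L'. lattice s \<tau> L \<and> lattice s \<tau> L' \<longrightarrow> (\<exists>N::nat. \<forall>n>N. (T ^^ n) ` L' \<subseteq> L))"

locale tate_operator = tate_module s \<tau> sP sQ i pr
  for s :: "'r::ring_1 \<Rightarrow> 'm::ab_group_add \<Rightarrow> 'm" and \<tau> :: "'m topology"
    and sP :: "'r \<Rightarrow> 'p::ab_group_add \<Rightarrow> 'p" and sQ :: "'q::ab_group_add \<Rightarrow> 'r \<Rightarrow> 'q"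
    and i :: "'m \<Rightarrow> 'p \<times> ('q \<Rightarrow> 'r)" and pr :: "'p \<times> ('q \<Rightarrow> 'r) \<Rightarrow> 'm" +
  fixes T :: "'m \<Rightarrow> 'm"
  assumes T_add: "\<And>x y. T (x + y) = T x + T y"
    and T_scale: "\<And>r x. T (s r x) = s r (T x)"
    and T_cont: "continuous_map \<tau> \<tau> T"
begin

lemma additive_funpow: "Modules.additive (T ^^ n)"
  unfolding Modules.additive_def by (induction n) (auto simp: T_add)

lemma funpow_scale: "(T ^^ n) (s r x) = s r ((T ^^ n) x)"
  by (induction n) (auto simp: T_scale)

lemma continuous_map_funpow: "continuous_map \<tau> \<tau> (T ^^ n)"
  by (induction n) (auto intro: continuous_map_compose[OF _ T_cont, unfolded o_def])

definition partial_sum :: "'r fps \<Rightarrow> 'm \<Rightarrow> nat \<Rightarrow> 'm" where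
  "partial_sum f x N = (\<Sum>n<N. s (fps_nth f n) ((T ^^ n) x))"

lemma additive_partial_sum: "Modules.additive (\<lambda>x. partial_sum f x N)"
  unfolding Modules.additive_def partial_sum_def
  by (simp add: Modules.additive.add[OF additive_funpow] lmod_add[OF lmod_s] sum.distrib)

lemma partial_sum_add_left: "partial_sum (f + g) x N = partial_sum f x N + partial_sum g x N"
  unfolding partial_sum_def by (simp add: lmod_radd[OF lmod_s] sum.distrib)

lemma partial_sum_cong:
  "(\<And>n. n < N \<Longrightarrow> fps_nth f n = fps_nth g n) \<Longrightarrow> partial_sum f x N = partial_sum g x N"
  unfolding partial_sum_def by simp

lemma partial_sum_monomial:
  assumes "k < N"
  shows "partial_sum (fps_const c * fps_X ^ k) x N = s c ((T ^^ k) x)"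
proof -
  have "partial_sum (fps_const c * fps_X ^ k) x N = (\<Sum>n<N. if n = k then s c ((T ^^ k) x) else 0)"
    unfolding partial_sum_def by (intro sum.cong) (auto simp: lmod_rzero[OF lmod_s])
  then show ?thesis
    using assms by simp
qed

lemma partial_sum_shift:
  "partial_sum (fps_const c * fps_X ^ k * g) x (N + k) = s c ((T ^^ k) (partial_sum g x N))"
proof (induction N)
  case 0
  have "partial_sum (fps_const c * fps_X ^ k * g) x k = 0"
    unfolding partial_sum_def
    by (intro sum.neutral) (simp add: mult.assoc fps_X_power_mult_nth lmod_rzero[OF lmod_s])
  then show ?case
    by (simp add: partial_sum_def Modules.additive.zero[OF additive_funpow] lmod_zero[OF lmod_s])
next
  case (Suc N)
  have "(T ^^ (N + k)) x = (T ^^ k) ((T ^^ N) x)"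
    by (metis add.commute comp_apply funpow_add)
  then have "s (fps_nth (fps_const c * fps_X ^ k * g) (N + k)) ((T ^^ (N + k)) x) =
      s c ((T ^^ k) (s (fps_nth g N) ((T ^^ N) x)))"
    by (simp add: mult.assoc fps_X_power_mult_nth lmod_mult[OF lmod_s] funpow_scale)
  then show ?case
    using Suc by (simp add: partial_sum_def Modules.additive.add[OF additive_funpow] lmod_add[OF lmod_s])
qed

lemma partial_sum_diff:
  assumes "K \<le> N" "\<And>n. n < K \<Longrightarrow> fps_nth f n = fps_nth f0 n"
  shows "partial_sum f x N - partial_sum f0 x0 K =
    (\<Sum>n\<in>{K..<N}. s (fps_nth f n) ((T ^^ n) x)) + partial_sum f0 (x - x0) K"
proof -
  have "partial_sum f x N = partial_sum f x K + (\<Sum>n\<in>{K..<N}. s (fps_nth f n) ((T ^^ n) x))"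
    unfolding partial_sum_def using assms(1)
    by (simp add: atLeast0LessThan[symmetric] sum.atLeastLessThan_concat)
  moreover have "partial_sum f x K - partial_sum f0 x0 K = partial_sum f0 (x - x0) K"
    using assms(2) by (simp add: partial_sum_cong[of K f f0] Modules.additive.diff[OF additive_partial_sum])
  ultimately show ?thesis
    by (simp add: algebra_simps)
qed

end

locale nilpotent_tate_operator = tate_operator s \<tau> sP sQ i pr T
  for s :: "'r::ring_1 \<Rightarrow> 'm::ab_group_add \<Rightarrow> 'm" and \<tau> :: "'m topology"
    and sP :: "'r \<Rightarrow> 'p::ab_group_add \<Rightarrow> 'p" and sQ :: "'q::ab_group_add \<Rightarrow> 'r \<Rightarrow> 'q"
    and i :: "'m \<Rightarrow> 'p \<times> ('q \<Rightarrow> 'r)" and pr :: "'p \<times> ('q \<Rightarrow> 'r) \<Rightarrow> 'm"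
    and T :: "'m \<Rightarrow> 'm" +
  assumes nilpotent: "topologically_nilpotent s \<tau> T"
begin

lemma funpow_tendsto_zero:
  assumes "openin \<tau> W" "0 \<in> W"
  shows "\<forall>\<^sub>F n in sequentially. (T ^^ n) x \<in> W"
proof -
  obtain C where C: "finite C" "basic_lattice C \<subseteq> W"
    using basic_lattice_subset[OF assms] by blast
  let ?L = "{l + s r x | l r. l \<in> basic_lattice {}}"
  have "x \<in> ?L"
    using lsubmodD(1)[OF lsubmod_basic_lattice] lmod_one[OF lmod_s]
    by (intro CollectI exI[of _ 0] exI[of _ 1]) simp
  moreover obtain N where "\<forall>n>N. (T ^^ n) ` ?L \<subseteq> basic_lattice C"
    using nilpotent lattice_add_line[OF lattice_basic_lattice] lattice_basic_lattice[OF C(1)]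
    unfolding topologically_nilpotent_def by blast
  ultimately show ?thesis
    using C(2) by (intro eventually_mono[OF eventually_gt_at_top[of N]]) blast
qed

lemma funpow_uniformly_small:
  assumes "openin \<tau> W" "0 \<in> W"
  shows "\<exists>V. openin \<tau> V \<and> 0 \<in> V \<and> (\<forall>n. (T ^^ n) ` V \<subseteq> W)"
proof -
  obtain C where C: "finite C" "basic_lattice C \<subseteq> W"
    using basic_lattice_subset[OF assms] by blast
  obtain N where N: "\<forall>n>N. (T ^^ n) ` basic_lattice {} \<subseteq> basic_lattice C"
    using nilpotent lattice_basic_lattice[of "{}"] lattice_basic_lattice[OF C(1)]
    unfolding topologically_nilpotent_def by blast
  define V where "V = basic_lattice {} \<inter> (\<Inter>n\<in>{..N}. {v. (T ^^ n) v \<in> W})"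
  have "openin \<tau> V"
    unfolding V_def using openin_continuous_map_preimage[OF continuous_map_funpow assms(1)]
    by (intro openin_Int openin_basic_lattice openin_INT2) auto
  moreover have "0 \<in> V"
    unfolding V_def using assms(2) lsubmodD(1)[OF lsubmod_basic_lattice]
    by (simp add: Modules.additive.zero[OF additive_funpow])
  moreover have "(T ^^ n) v \<in> W" if "v \<in> V" for n v
  proof (cases "n \<le> N")
    case False
    then have "(T ^^ n) ` basic_lattice {} \<subseteq> W"
      using N C(2) not_le by blast
    then show ?thesis
      using that unfolding V_def by blast
  qed (use that in \<open>auto simp: V_def\<close>)
  ultimately show ?thesis
    by blast
qed

section \<open>The action of \<open>R[[t]]\<close>\<close>

lemma partial_sum_locally_stable:
  assumes "openin \<tau> W" "lsubmod s W"
  shows "\<exists>K U. openin (prod_topology euclidean \<tau>) U \<and> (f0, x0) \<in> U \<and>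
           (\<forall>(f, x)\<in>U. \<forall>N\<ge>K. partial_sum f x N - partial_sum f0 x0 K \<in> W)"
proof -
  obtain V where V: "openin \<tau> V" "0 \<in> V" "\<And>n. (T ^^ n) ` V \<subseteq> W"
    using funpow_uniformly_small[OF assms(1) lsubmodD(1)[OF assms(2)]] by blast
  obtain K where K: "\<And>n. n \<ge> K \<Longrightarrow> (T ^^ n) x0 \<in> W"
    using funpow_tendsto_zero[OF assms(1) lsubmodD(1)[OF assms(2)], of x0]
    unfolding eventually_sequentially by blast
  define U where "U = {f. fps_cutoff K f = fps_cutoff K f0} \<times> {x. x - x0 \<in> V}"
  have "openin (prod_topology euclidean \<tau>) U"
    unfolding U_def openin_prod_Times_iff
    using open_fps_cutoff[of K f0] openin_translate[OF V(1)] by (simp add: open_openin[symmetric])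
  moreover have "(f0, x0) \<in> U"
    using V(2) by (simp add: U_def)
  moreover have "partial_sum f x N - partial_sum f0 x0 K \<in> W" if "(f, x) \<in> U" "N \<ge> K" for f x N
  proof -
    have coeff: "fps_nth f n = fps_nth f0 n" if "n < K" for n
      using \<open>(f, x) \<in> U\<close> that unfolding U_def fps_cutoff_eq_fps_cutoff_iff by simp
    have small: "(T ^^ n) (x - x0) \<in> W" for n
      using \<open>(f, x) \<in> U\<close> V(3) unfolding U_def by blast
    have tail: "(T ^^ n) x \<in> W" if "n \<ge> K" for n
      using lsubmodD(2)[OF assms(2) small[of n] K[OF that]]
      by (simp add: Modules.additive.diff[OF additive_funpow])
    have "partial_sum f x N - partial_sum f0 x0 K =
        (\<Sum>n\<in>{K..<N}. s (fps_nth f n) ((T ^^ n) x)) + partial_sum f0 (x - x0) K"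
      by (rule partial_sum_diff[OF \<open>N \<ge> K\<close> coeff])
    moreover have "(\<Sum>n\<in>{K..<N}. s (fps_nth f n) ((T ^^ n) x)) \<in> W"
      using tail by (intro lsubmod_sum[OF assms(2)] lsubmodD(3)[OF assms(2)]) simp
    moreover have "partial_sum f0 (x - x0) K \<in> W"
      unfolding partial_sum_def using small by (intro lsubmod_sum[OF assms(2)] lsubmodD(3)[OF assms(2)])
    ultimately show ?thesis
      using lsubmodD(2)[OF assms(2)] by simp
  qed
  ultimately show ?thesis
    by blast
qed

lemma partial_sum_coord_locally_const:
  assumes "Modules.additive \<psi>" "openin \<tau> {z. \<psi> z = 0}" "lsubmod s {z. \<psi> z = 0}"
  shows "\<exists>K U. openin (prod_topology euclidean \<tau>) U \<and> (f0, x0) \<in> U \<and>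
           (\<forall>(f, x)\<in>U. \<forall>N\<ge>K. \<psi> (partial_sum f x N) = \<psi> (partial_sum f0 x0 K))"
  using partial_sum_locally_stable[OF assms(2,3), of f0 x0]
  by (simp add: Modules.additive.diff[OF assms(1)])

lemma eventually_partial_sum_coord:
  assumes "Modules.additive \<psi>" "openin \<tau> {z. \<psi> z = 0}" "lsubmod s {z. \<psi> z = 0}"
  shows "\<forall>\<^sub>F N in sequentially. \<psi> (partial_sum f x N) = eventual_value (\<lambda>N. \<psi> (partial_sum f x N))"
proof -
  obtain K where "\<forall>N\<ge>K. \<psi> (partial_sum f x N) = \<psi> (partial_sum f x K)"
    using partial_sum_coord_locally_const[OF assms, of f x] by fast
  then have "\<forall>\<^sub>F N in sequentially. \<psi> (partial_sum f x N) = \<psi> (partial_sum f x K)"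
    unfolding eventually_sequentially by (intro exI[of _ K])
  moreover from this have "eventual_value (\<lambda>N. \<psi> (partial_sum f x N)) = \<psi> (partial_sum f x K)"
    by (rule eventual_value_eqI)
  ultimately show ?thesis
    by simp
qed

lemma continuous_map_partial_sum_coord:
  assumes "Modules.additive \<psi>" "openin \<tau> {z. \<psi> z = 0}" "lsubmod s {z. \<psi> z = 0}"
  shows "continuous_map (prod_topology euclidean \<tau>) (discrete_topology UNIV)
           (\<lambda>(f, x). eventual_value (\<lambda>N. \<psi> (partial_sum f x N)))"
proof (rule continuous_map_to_discreteI)
  fix z :: "'r fps \<times> 'm"
  obtain f0 x0 where z: "z = (f0, x0)"
    by fastforce
  obtain K U where U: "openin (prod_topology euclidean \<tau>) U" "(f0, x0) \<in> U"
      "\<forall>(f, x)\<in>U. \<forall>N\<ge>K. \<psi> (partial_sum f x N) = \<psi> (partial_sum f0 x0 K)"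
    using partial_sum_coord_locally_const[OF assms, of f0 x0] by fast
  have "eventual_value (\<lambda>N. \<psi> (partial_sum f x N)) = \<psi> (partial_sum f0 x0 K)" if "(f, x) \<in> U" for f x
  proof -
    have "\<forall>N\<ge>K. \<psi> (partial_sum f x N) = \<psi> (partial_sum f0 x0 K)"
      using U(3) that by fast
    then show ?thesis
      by (intro eventual_value_eqI) (auto simp: eventually_sequentially)
  qed
  then show "\<exists>U. openin (prod_topology euclidean \<tau>) U \<and> z \<in> U \<and>
      (\<forall>w\<in>U. (\<lambda>(f, x). eventual_value (\<lambda>N. \<psi> (partial_sum f x N))) w =
              (\<lambda>(f, x). eventual_value (\<lambda>N. \<psi> (partial_sum f x N))) z)"
    using U(1,2) z by (intro exI[of _ U]) auto
qed

definition coord_limit :: "'r fps \<Rightarrow> 'm \<Rightarrow> 'p \<times> ('q \<Rightarrow> 'r)" where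
  "coord_limit f x = (eventual_value (\<lambda>N. fst (i (partial_sum f x N))),
     \<lambda>q. eventual_value (\<lambda>N. snd (i (partial_sum f x N)) q))"

lemma eventually_fst_coord_limit:
  "\<forall>\<^sub>F N in sequentially. fst (i (partial_sum f x N)) = fst (coord_limit f x)"
  unfolding coord_limit_def using eventually_partial_sum_coord[OF additive_fst_i fst_i_kernel] by simp

lemma eventually_snd_coord_limit:
  "\<forall>\<^sub>F N in sequentially. snd (i (partial_sum f x N)) q = snd (coord_limit f x) q"
  unfolding coord_limit_def using eventually_partial_sum_coord[OF additive_snd_i snd_i_kernel] by simp

lemma snd_coord_limit_in_rdual: "snd (coord_limit f x) \<in> rdual sQ"
  unfolding rdual_def
proof (intro CollectI conjI allI)
  fix q1 q2
  have "\<forall>\<^sub>F N in sequentially.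
      snd (coord_limit f x) (q1 + q2) = snd (coord_limit f x) q1 + snd (coord_limit f x) q2"
    using eventually_snd_coord_limit[of f x q1] eventually_snd_coord_limit[of f x q2]
      eventually_snd_coord_limit[of f x "q1 + q2"]
    by eventually_elim (metis rdual_add snd_i_in_rdual)
  then show "snd (coord_limit f x) (q1 + q2) = snd (coord_limit f x) q1 + snd (coord_limit f x) q2"
    by simp
next
  fix q r
  have "\<forall>\<^sub>F N in sequentially. snd (coord_limit f x) (sQ q r) = snd (coord_limit f x) q * r"
    using eventually_snd_coord_limit[of f x q] eventually_snd_coord_limit[of f x "sQ q r"]
    by eventually_elim (metis rdual_scale snd_i_in_rdual)
  then show "snd (coord_limit f x) (sQ q r) = snd (coord_limit f x) q * r"
    by simp
qed

lemma continuous_map_coord_limit: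
  "continuous_map (prod_topology euclidean \<tau>) (PQ_top sQ) (\<lambda>(f, x). coord_limit f x)"
proof -
  have "continuous_map (prod_topology euclidean \<tau>) (discrete_topology UNIV)
      (\<lambda>(f, x). fst (coord_limit f x))"
    using continuous_map_partial_sum_coord[OF additive_fst_i fst_i_kernel]
    by (simp add: coord_limit_def)
  moreover have "continuous_map (prod_topology euclidean \<tau>) (discrete_topology UNIV)
      (\<lambda>(f, x). snd (coord_limit f x) q)" for q
    using continuous_map_partial_sum_coord[OF additive_snd_i snd_i_kernel]
    by (simp add: coord_limit_def)
  then have "continuous_map (prod_topology euclidean \<tau>) (rdual_top sQ)
      (\<lambda>(f, x). snd (coord_limit f x))"
    unfolding rdual_top_def continuous_map_in_subtopology continuous_map_componentwise_UNIV
    using snd_coord_limit_in_rdual by (auto simp: case_prod_unfold)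
  ultimately have "continuous_map (prod_topology euclidean \<tau>) (PQ_top sQ)
      (\<lambda>z. ((\<lambda>(f, x). fst (coord_limit f x)) z, (\<lambda>(f, x). snd (coord_limit f x)) z))"
    unfolding PQ_top_def by (rule continuous_map_pairedI)
  then show ?thesis
    by (simp add: case_prod_unfold)
qed

definition fps_action :: "'r fps \<Rightarrow> 'm \<Rightarrow> 'm" where
  "fps_action f x = pr (coord_limit f x)"

lemma limitin_partial_sum: "limitin \<tau> (partial_sum f x) (fps_action f x) sequentially"
  unfolding fps_action_def
  using snd_coord_limit_in_rdual eventually_fst_coord_limit eventually_snd_coord_limit
  by (rule limitin_pr)

lemma fps_action_eqI: "limitin \<tau> (partial_sum f x) l sequentially \<Longrightarrow> fps_action f x = l"
  using limitin_partial_sum limitin_tau_unique by blast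

lemma continuous_map_fps_action:
  "continuous_map (prod_topology euclidean \<tau>) \<tau> (\<lambda>(f, x). fps_action f x)"
  using continuous_map_compose[OF continuous_map_coord_limit continuous_map_pr]
  by (simp add: fps_action_def o_def case_prod_unfold)

lemma continuous_map_fps_action_left: "continuous_map euclidean \<tau> (\<lambda>f. fps_action f x)"
  using continuous_map_slice_left[OF continuous_map_fps_action] by simp

lemma additive_fps_action_right: "Modules.additive (fps_action f)"
  unfolding Modules.additive_def
proof (intro allI fps_action_eqI)
  fix x y
  have "partial_sum f (x + y) = (\<lambda>N. partial_sum f x N + partial_sum f y N)"
    by (simp add: fun_eq_iff Modules.additive.add[OF additive_partial_sum])
  then show "limitin \<tau> (partial_sum f (x + y)) (fps_action f x + fps_action f y) sequentially"
    using limitin_add[OF limitin_partial_sum limitin_partial_sum] by simp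
qed

lemma additive_fps_action_left: "Modules.additive (\<lambda>f. fps_action f x)"
  unfolding Modules.additive_def
proof (intro allI fps_action_eqI)
  fix f g
  have "partial_sum (f + g) x = (\<lambda>N. partial_sum f x N + partial_sum g x N)"
    by (simp add: fun_eq_iff partial_sum_add_left)
  then show "limitin \<tau> (partial_sum (f + g) x) (fps_action f x + fps_action g x) sequentially"
    using limitin_add[OF limitin_partial_sum limitin_partial_sum] by simp
qed

lemma fps_action_monomial: "fps_action (fps_const c * fps_X ^ k) x = s c ((T ^^ k) x)"
proof (rule fps_action_eqI, rule limitin_eventually)
  show "\<forall>\<^sub>F N in sequentially. partial_sum (fps_const c * fps_X ^ k) x N = s c ((T ^^ k) x)"
    by (intro eventually_mono[OF eventually_gt_at_top[of k]] partial_sum_monomial)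
qed simp

lemma fps_action_const: "fps_action (fps_const c) x = s c x"
  using fps_action_monomial[of c 0 x] by simp

lemma fps_action_X: "fps_action fps_X x = T x"
  using fps_action_monomial[of 1 1 x] by (simp add: lmod_one[OF lmod_s])

lemma fps_action_shift:
  "fps_action (fps_const c * fps_X ^ k * g) x = s c ((T ^^ k) (fps_action g x))"
proof (rule fps_action_eqI, rule limitin_sequentially_offset_rev)
  have "limitin \<tau> (\<lambda>N. s c ((T ^^ k) (partial_sum g x N))) (s c ((T ^^ k) (fps_action g x)))
      sequentially"
    using continuous_map_limit[OF continuous_map_compose[OF continuous_map_funpow continuous_map_scale]
        limitin_partial_sum]
    by (simp add: o_def)
  then show "limitin \<tau> (\<lambda>N. partial_sum (fps_const c * fps_X ^ k * g) x (N + k))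
      (s c ((T ^^ k) (fps_action g x))) sequentially"
    by (simp add: partial_sum_shift)
qed

lemma fps_action_mult: "fps_action (f * g) x = fps_action f (fps_action g x)"
proof (rule fps_additive_continuous_eqI[OF Hausdorff_space_tau,
      where \<Phi> = "\<lambda>f. fps_action (f * g) x"])
  show "Modules.additive (\<lambda>f. fps_action (f * g) x)"
    using additive_fps_action_left by (simp add: Modules.additive_def distrib_right)
  have "continuous_map euclidean euclidean (\<lambda>f. f * g)"
    using continuous_fps_mult_right by simp
  from continuous_map_compose[OF this continuous_map_fps_action_left]
  show "continuous_map euclidean \<tau> (\<lambda>f. fps_action (f * g) x)"
    by (simp add: o_def)
  show "fps_action (fps_const c * fps_X ^ n * g) x =
      fps_action (fps_const c * fps_X ^ n) (fps_action g x)" for c n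
    by (simp add: fps_action_shift fps_action_monomial)
qed (fact additive_fps_action_left continuous_map_fps_action_left)+

lemma tadic_structure_fps_action: "tadic_structure s \<tau> T fps_action"
  unfolding tadic_structure_def lmod_def
  using Modules.additive.add[OF additive_fps_action_right]
    Modules.additive.add[OF additive_fps_action_left] fps_action_mult fps_action_const[of 1] fps_action_const fps_action_X continuous_map_fps_action
    continuous_map_add
  by (simp add: lmod_one[OF lmod_s])

end

section \<open>Uniqueness and the converse\<close>

context tate_operator
begin

lemma tadic_structureD:
  assumes "tadic_structure s \<tau> T S"
  shows "lmod S" "S (fps_const r) x = s r x" "S fps_X x = T x"
    "continuous_map (prod_topology euclidean \<tau>) \<tau> (\<lambda>(f, x). S f x)"
  using assms unfolding tadic_structure_def by auto

lemma tadic_structure_funpow: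
  assumes "tadic_structure s \<tau> T S"
  shows "S (fps_X ^ n) x = (T ^^ n) x"
proof (induction n arbitrary: x)
  case 0
  then show ?case
    using tadic_structureD(2)[OF assms, of 1] by (simp add: lmod_one[OF lmod_s])
next
  case (Suc n)
  then show ?case
    using lmod_mult[OF tadic_structureD(1)[OF assms], of fps_X "fps_X ^ n"]
    by (simp add: tadic_structureD(3)[OF assms])
qed

lemma tadic_structure_monomial:
  assumes "tadic_structure s \<tau> T S"
  shows "S (fps_const c * fps_X ^ n) x = s c ((T ^^ n) x)"
  by (simp add: lmod_mult[OF tadic_structureD(1)[OF assms]] tadic_structure_funpow[OF assms]
      tadic_structureD(2)[OF assms])

lemma continuous_map_tadic_structure_left:
  assumes "tadic_structure s \<tau> T S"
  shows "continuous_map euclidean \<tau> (\<lambda>f. S f x)"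
  using continuous_map_slice_left[OF tadic_structureD(4)[OF assms]] by simp

lemma tadic_structure_unique:
  assumes "tadic_structure s \<tau> T S1" "tadic_structure s \<tau> T S2"
  shows "S1 = S2"
proof (intro ext)
  fix f x
  show "S1 f x = S2 f x"
  proof (rule fps_additive_continuous_eqI[OF Hausdorff_space_tau])
    show "Modules.additive (\<lambda>f. S1 f x)" "Modules.additive (\<lambda>f. S2 f x)"
      using lmod_radd[OF tadic_structureD(1)[OF assms(1)]] lmod_radd[OF tadic_structureD(1)[OF assms(2)]]
      by (simp_all add: Modules.additive_def)
  qed (simp_all add: continuous_map_tadic_structure_left assms tadic_structure_monomial)
qed

lemma tadic_structure_funpow_small:
  assumes S: "tadic_structure s \<tau> T S" and L: "openin \<tau> L" "0 \<in> L"
  shows "\<exists>V k. openin \<tau> V \<and> 0 \<in> V \<and> (\<forall>n\<ge>k. (T ^^ n) ` V \<subseteq> L)"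
proof -
  let ?A = "{z \<in> topspace (prod_topology euclidean \<tau>). (\<lambda>(f, x). S f x) z \<in> L}"
  have "openin (prod_topology euclidean \<tau>) ?A"
    by (rule openin_continuous_map_preimage[OF tadic_structureD(4)[OF S] L(1)])
  moreover have "(0, 0) \<in> ?A"
    using L(2) lmod_rzero[OF tadic_structureD(1)[OF S]] by simp
  ultimately obtain U V where UV: "openin euclidean U" "openin \<tau> V" "0 \<in> U" "0 \<in> V" "U \<times> V \<subseteq> ?A"
    unfolding openin_prod_topology_alt by meson
  then obtain k where k: "{G. fps_cutoff k G = fps_cutoff k 0} \<subseteq> U"
    unfolding open_openin[symmetric] open_fps_iff by blast
  have "(T ^^ n) v \<in> L" if "n \<ge> k" "v \<in> V" for n v
  proof -
    have "fps_cutoff k (fps_X ^ n) = fps_cutoff k 0"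
      using that(1) by (auto simp: fps_eq_iff)
    then have "(fps_X ^ n, v) \<in> ?A"
      using k UV(5) that(2) by blast
    then show ?thesis
      by (simp add: tadic_structure_funpow[OF S])
  qed
  then show ?thesis
    using UV(2,4) by blast
qed

lemma tadic_structure_funpow_tendsto:
  assumes S: "tadic_structure s \<tau> T S" and L: "openin \<tau> L" "0 \<in> L"
  shows "\<forall>\<^sub>F n in sequentially. (T ^^ n) x \<in> L"
proof -
  have "limitin euclidean (\<lambda>n. fps_X ^ n :: 'r fps) 0 sequentially"
    using tendsto_fps_X_power by simp
  from continuous_map_limit[OF continuous_map_tadic_structure_left[OF S] this]
  have "limitin \<tau> (\<lambda>n. (T ^^ n) x) 0 sequentially"
    by (simp add: o_def tadic_structure_funpow[OF S] lmod_rzero[OF tadic_structureD(1)[OF S]])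
  then show ?thesis
    using L by (rule limitinD)
qed

lemma funpow_lattice_eventually_subset:
  assumes L: "lsubmod s L" and L': "lattice s \<tau> L'"
    and V: "openin \<tau> V" "0 \<in> V" "\<forall>n\<ge>k. (T ^^ n) ` V \<subseteq> L"
    and pointwise: "\<And>x. \<forall>\<^sub>F n in sequentially. (T ^^ n) x \<in> L"
  shows "\<exists>N. \<forall>n>N. (T ^^ n) ` L' \<subseteq> L"
proof -
  obtain G where G: "finite G" "\<And>x. x \<in> L' \<Longrightarrow> \<exists>c. x - (\<Sum>g\<in>G. s (c g) g) \<in> V"
    using lattice_fg_modulo_open[OF L' V(1,2)] by blast
  have "\<forall>\<^sub>F n in sequentially. (\<forall>g\<in>G. (T ^^ n) g \<in> L) \<and> n \<ge> k"
    using G(1) pointwise by (intro eventually_conj eventually_ball_finite eventually_ge_at_top) auto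
  then obtain N where N: "\<And>n. n \<ge> N \<Longrightarrow> (\<forall>g\<in>G. (T ^^ n) g \<in> L) \<and> n \<ge> k"
    unfolding eventually_sequentially by blast
  have "(T ^^ n) x \<in> L" if n: "n > N" and x: "x \<in> L'" for n x
  proof -
    obtain c where c: "x - (\<Sum>g\<in>G. s (c g) g) \<in> V"
      using G(2) x by blast
    have "(T ^^ n) x = (\<Sum>g\<in>G. s (c g) ((T ^^ n) g)) + (T ^^ n) (x - (\<Sum>g\<in>G. s (c g) g))"
      by (simp add: Modules.additive.diff[OF additive_funpow] Modules.additive.sum[OF additive_funpow]
          funpow_scale)
    moreover have "(\<Sum>g\<in>G. s (c g) ((T ^^ n) g)) \<in> L"
      using N[of n] n by (intro lsubmod_sum[OF L] lsubmodD(3)[OF L]) auto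
    moreover have "(T ^^ n) (x - (\<Sum>g\<in>G. s (c g) g)) \<in> L"
    proof -
      have "(T ^^ n) ` V \<subseteq> L"
        using V(3) N[of n] n by simp
      then show ?thesis
        using c by (auto simp: image_subset_iff)
    qed
    ultimately show ?thesis
      using lsubmodD(2)[OF L] by simp
  qed
  then show ?thesis
    by blast
qed

lemma tadic_structure_imp_topologically_nilpotent:
  assumes "tadic_structure s \<tau> T S"
  shows "topologically_nilpotent s \<tau> T"
  unfolding topologically_nilpotent_def
proof (intro allI impI, elim conjE)
  fix L L' assume L: "lattice s \<tau> L" and L': "lattice s \<tau> L'"
  then have L_open: "openin \<tau> L" and L_sub: "lsubmod s L"
    unfolding lattice_def by auto
  obtain V k where V: "openin \<tau> V" "0 \<in> V" "\<forall>n\<ge>k. (T ^^ n) ` V \<subseteq> L"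
    using tadic_structure_funpow_small[OF assms L_open lsubmodD(1)[OF L_sub]] by blast
  show "\<exists>N. \<forall>n>N. (T ^^ n) ` L' \<subseteq> L"
    by (rule funpow_lattice_eventually_subset[OF L_sub L' V
          tadic_structure_funpow_tendsto[OF assms L_open lsubmodD(1)[OF L_sub]]])
qed

end

theorem lemma3p9:
  fixes s :: "'r::ring_1 \<Rightarrow> 'm::ab_group_add \<Rightarrow> 'm"
    and \<tau> :: "'m topology"
    and sP :: "'r \<Rightarrow> 'p::ab_group_add \<Rightarrow> 'p"
    and sQ :: "'q::ab_group_add \<Rightarrow> 'r \<Rightarrow> 'q"
    and i :: "'m \<Rightarrow> 'p \<times> ('q \<Rightarrow> 'r)"
    and pr :: "'p \<times> ('q \<Rightarrow> 'r) \<Rightarrow> 'm"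
    and T :: "'m \<Rightarrow> 'm"
  assumes tate: "tate_witness s \<tau> sP sQ i pr"
    and T_add: "\<And>x y. T (x + y) = T x + T y"
    and T_lin: "\<And>r x. T (s r x) = s r (T x)"
    and T_cont: "continuous_map \<tau> \<tau> T"
  shows "(\<forall>L L'. lattice s \<tau> L \<and> lattice s \<tau> L' \<longrightarrow>
            (\<exists>N::nat. \<forall>n>N. (T ^^ n) ` L' \<subseteq> L))
         \<longleftrightarrow> (\<exists>!S. tadic_structure s \<tau> T S)"
proof -
  interpret tate_operator s \<tau> sP sQ i pr T
    using tate T_add T_lin T_cont by unfold_locales
  have "topologically_nilpotent s \<tau> T \<longleftrightarrow> (\<exists>!S. tadic_structure s \<tau> T S)"
  proof
    assume "topologically_nilpotent s \<tau> T"
    then interpret nilpotent_tate_operator s \<tau> sP sQ i pr T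
      by unfold_locales
    show "\<exists>!S. tadic_structure s \<tau> T S"
      using tadic_structure_fps_action tadic_structure_unique by blast
  next
    assume "\<exists>!S. tadic_structure s \<tau> T S"
    then show "topologically_nilpotent s \<tau> T"
      using tadic_structure_imp_topologically_nilpotent by blast
  qed
  then show ?thesis
    unfolding topologically_nilpotent_def .
qed

end
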